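(* Let $P$ be a continuous poset and $(T_\varepsilon)_{\varepsilon\ge0}$ a superlinear family of Scott-continuous translations satisfying TR1, TR2 and TR3. Then (i) for a persistence module $M$ over $P$, $d_a(M,0)=0$ iff $M$ is ephemeral; (ii) for a Scott sheaf $\mathcal F$ on $P^\sigma$, $d_\sigma(\mathcal F,0)=0$ iff $\mathcal F=0$.
   Context: Let $P$ be a poset (as a category, $p\to q$ iff $p\le q$). A subset is directed if nonempty and any two elements have an upper bound in it. $x\ll y$ means: for every directed $D$ whose supremum exists with $y\le\sup D$, some $d\in D$ satisfies $x\le d$. $P$ is continuous if for each $p$ the set $\{x:x\ll p\}$ is directed with supremum $p$. $U$ is Scott-open if it is an up-set meeting every directed set whose supremum exists and lies in $U$; $P^\sigma$ is $P$ with this topology. A map $f\colon P\to P$ is Scott-continuous if order-preserving and $f(\sup D)=\sup f(D)$ for directed $D$ with existing supremum. A translation is an order-preserving $T$ with $p\le T(p)$; a family $(T_\varepsilon)_{\varepsilon\ge0}$ is superlinear if $T_\varepsilon(T_\delta(p))\le T_{\varepsilon+\delta}(p)$. TR1: each $T_\varepsilon$ is an order-isomorphism. TR2: $x\ll T_\varepsilon(x)$ for all $x$ and $\varepsilon>0$. TR3: for every $p\ll q$ there is $\varepsilon>0$ with $p\le T_\varepsilon(p)\le q$. $k$ is a commutative ring with unity; persistence modules are functors from $P$ to $k$-modules; Scott sheaves are sheaves of $k$-modules on $P^\sigma$. For a persistence module, $T^*M=M\circ T$ with natural morphism $M\to T^*M$ given by $M(p\le T(p))$; for a Scott sheaf,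 $T^*\mathcal F$ is the sheaf inverse image along $T\colon P^\sigma\to P^\sigma$, with natural morphism $\mathcal F\to T^*\mathcal F$ induced on stalks by $\mathcal F_p\to\mathcal F_{T(p)}$. Objects $A,B$ are $\varepsilon$-interleaved if there are morphisms $f\colon A\to T_\varepsilon^*B$, $g\colon B\to T_\varepsilon^*A$ with $T_\varepsilon^*(g)\circ f$ and $T_\varepsilon^*(f)\circ g$ equal to the natural morphisms $A\to T_\varepsilon^*T_\varepsilon^*A$, $B\to T_\varepsilon^*T_\varepsilon^*B$. The interleaving distance is the infimum of such $\varepsilon$ ($\infty$ if none): $d_a$ for persistence modules, $d_\sigma$ for Scott sheaves. $M$ is ephemeral if $M(p\le q)=0$ for all $p\ll q$. *)

theory Defs
  imports Complex_Main "HOL-Library.Extended_Real" "HOL-Algebra.Module"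
begin

definition directed :: "'p::order set \<Rightarrow> bool" where
  "directed D \<longleftrightarrow> D \<noteq> {} \<and> (\<forall>x\<in>D. \<forall>y\<in>D. \<exists>z\<in>D. x \<le> z \<and> y \<le> z)"

definition is_sup :: "'p::order set \<Rightarrow> 'p \<Rightarrow> bool" where
  "is_sup D s \<longleftrightarrow> (\<forall>d\<in>D. d \<le> s) \<and> (\<forall>u. (\<forall>d\<in>D. d \<le> u) \<longrightarrow> s \<le> u)"

definition way_below :: "'p::order \<Rightarrow> 'p \<Rightarrow> bool" (infix \<open>\<lless>\<close> 50) where
  "x \<lless> y \<longleftrightarrow> (\<forall>D s. directed D \<and> is_sup D s \<and> y \<le> s \<longrightarrow> (\<exists>d\<in>D. x \<le> d))"

definition continuous_poset :: "'p::order itself \<Rightarrow> bool" where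
  "continuous_poset TYPE('p) \<longleftrightarrow>
     (\<forall>p::'p. directed {x. x \<lless> p} \<and> is_sup {x. x \<lless> p} p)"

definition scott_open :: "'p::order set \<Rightarrow> bool" where
  "scott_open U \<longleftrightarrow> (\<forall>x y. x \<in> U \<and> x \<le> y \<longrightarrow> y \<in> U) \<and>
     (\<forall>D s. directed D \<and> is_sup D s \<and> s \<in> U \<longrightarrow> D \<inter> U \<noteq> {})"

definition scott_continuous :: "('p::order \<Rightarrow> 'p) \<Rightarrow> bool" where
  "scott_continuous f \<longleftrightarrow> mono f \<and>
     (\<forall>D s. directed D \<and> is_sup D s \<longrightarrow> is_sup (f ` D) (f s))"

definition translation :: "('p::order \<Rightarrow> 'p) \<Rightarrow> bool" where
  "translation T \<longleftrightarrow> mono T \<and> (\<forall>p. p \<le> T p)"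

text \<open>A family (T eps), eps >= 0; values at negative eps are irrelevant.\<close>

definition superlinear :: "(real \<Rightarrow> 'p::order \<Rightarrow> 'p) \<Rightarrow> bool" where
  "superlinear T \<longleftrightarrow> (\<forall>e d p. 0 \<le> e \<and> 0 \<le> d \<longrightarrow> T e (T d p) \<le> T (e + d) p)"

definition order_iso :: "('p::order \<Rightarrow> 'p) \<Rightarrow> bool" where
  "order_iso f \<longleftrightarrow> bij f \<and> (\<forall>x y. x \<le> y \<longleftrightarrow> f x \<le> f y)"

definition TR1 :: "(real \<Rightarrow> 'p::order \<Rightarrow> 'p) \<Rightarrow> bool" where
  "TR1 T \<longleftrightarrow> (\<forall>e\<ge>0. order_iso (T e))"

definition TR2 :: "(real \<Rightarrow> 'p::order \<Rightarrow> 'p) \<Rightarrow> bool" where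
  "TR2 T \<longleftrightarrow> (\<forall>x e. e > 0 \<longrightarrow> x \<lless> T e x)"

definition TR3 :: "(real \<Rightarrow> 'p::order \<Rightarrow> 'p) \<Rightarrow> bool" where
  "TR3 T \<longleftrightarrow> (\<forall>p q. p \<lless> q \<longrightarrow> (\<exists>e>0. p \<le> T e p \<and> T e p \<le> q))"

definition mod_hom :: "('r, 'x) ring_scheme \<Rightarrow> ('r, 'm) module \<Rightarrow> ('r, 'n) module
    \<Rightarrow> ('m \<Rightarrow> 'n) \<Rightarrow> bool" where
  "mod_hom R M N f \<longleftrightarrow> f \<in> carrier M \<rightarrow> carrier N \<and>
     (\<forall>x\<in>carrier M. \<forall>y\<in>carrier M. f (x \<oplus>\<^bsub>M\<^esub> y) = f x \<oplus>\<^bsub>N\<^esub> f y) \<and>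
     (\<forall>a\<in>carrier R. \<forall>x\<in>carrier M. f (a \<odot>\<^bsub>M\<^esub> x) = a \<odot>\<^bsub>N\<^esub> f x)"

definition zero_module :: "('r, unit) module" where
  "zero_module = \<lparr>carrier = {()}, mult = (\<lambda>_ _. ()), one = (), zero = (),
                  add = (\<lambda>_ _. ()), smult = (\<lambda>_ _. ())\<rparr>"

definition pers_module :: "('r, 'x) ring_scheme \<Rightarrow> ('p::order \<Rightarrow> ('r, 'm) module)
    \<Rightarrow> ('p \<Rightarrow> 'p \<Rightarrow> 'm \<Rightarrow> 'm) \<Rightarrow> bool" where
  "pers_module R Mo Mm \<longleftrightarrow>
     (\<forall>p. module R (Mo p)) \<and>
     (\<forall>p q. p \<le> q \<longrightarrow> mod_hom R (Mo p) (Mo q) (Mm p q)) \<and>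
     (\<forall>p. \<forall>x\<in>carrier (Mo p). Mm p p x = x) \<and>
     (\<forall>p q r. p \<le> q \<and> q \<le> r \<longrightarrow> (\<forall>x\<in>carrier (Mo p). Mm q r (Mm p q x) = Mm p r x))"

text \<open>A morphism A -> T^* B, i.e. a natural family A p -> B (T p).\<close>
definition pm_mor_to_pullback :: "('r, 'x) ring_scheme \<Rightarrow> ('p::order \<Rightarrow> 'p)
    \<Rightarrow> ('p \<Rightarrow> ('r, 'm) module) \<Rightarrow> ('p \<Rightarrow> 'p \<Rightarrow> 'm \<Rightarrow> 'm)
    \<Rightarrow> ('p \<Rightarrow> ('r, 'n) module) \<Rightarrow> ('p \<Rightarrow> 'p \<Rightarrow> 'n \<Rightarrow> 'n)
    \<Rightarrow> ('p \<Rightarrow> 'm \<Rightarrow> 'n) \<Rightarrow> bool" where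
  "pm_mor_to_pullback R T Ao Am Bo Bm f \<longleftrightarrow>
     (\<forall>p. mod_hom R (Ao p) (Bo (T p)) (f p)) \<and>
     (\<forall>p q. p \<le> q \<longrightarrow> (\<forall>x\<in>carrier (Ao p). f q (Am p q x) = Bm (T p) (T q) (f p x)))"

definition pm_interleaved :: "('r, 'x) ring_scheme \<Rightarrow> ('p::order \<Rightarrow> 'p)
    \<Rightarrow> ('p \<Rightarrow> ('r, 'm) module) \<Rightarrow> ('p \<Rightarrow> 'p \<Rightarrow> 'm \<Rightarrow> 'm)
    \<Rightarrow> ('p \<Rightarrow> ('r, 'n) module) \<Rightarrow> ('p \<Rightarrow> 'p \<Rightarrow> 'n \<Rightarrow> 'n) \<Rightarrow> bool" where
  "pm_interleaved R T Ao Am Bo Bm \<longleftrightarrow>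
     (\<exists>f g. pm_mor_to_pullback R T Ao Am Bo Bm f \<and> pm_mor_to_pullback R T Bo Bm Ao Am g \<and>
        (\<forall>p. \<forall>x\<in>carrier (Ao p). g (T p) (f p x) = Am p (T (T p)) x) \<and>
        (\<forall>p. \<forall>y\<in>carrier (Bo p). f (T p) (g p y) = Bm p (T (T p)) y))"

definition pm_dist :: "('r, 'x) ring_scheme \<Rightarrow> (real \<Rightarrow> 'p::order \<Rightarrow> 'p)
    \<Rightarrow> ('p \<Rightarrow> ('r, 'm) module) \<Rightarrow> ('p \<Rightarrow> 'p \<Rightarrow> 'm \<Rightarrow> 'm)
    \<Rightarrow> ('p \<Rightarrow> ('r, 'n) module) \<Rightarrow> ('p \<Rightarrow> 'p \<Rightarrow> 'n \<Rightarrow> 'n) \<Rightarrow> ereal" where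
  "pm_dist R T Ao Am Bo Bm =
     Inf {ereal e | e. 0 \<le> e \<and> pm_interleaved R (T e) Ao Am Bo Bm}"

definition ephemeral :: "('p::order \<Rightarrow> ('r, 'm) module) \<Rightarrow> ('p \<Rightarrow> 'p \<Rightarrow> 'm \<Rightarrow> 'm) \<Rightarrow> bool" where
  "ephemeral Mo Mm \<longleftrightarrow> (\<forall>p q. p \<lless> q \<longrightarrow> (\<forall>x\<in>carrier (Mo p). Mm p q x = \<zero>\<^bsub>Mo q\<^esub>))"

definition scott_sheaf :: "('r, 'x) ring_scheme \<Rightarrow> ('p::order set \<Rightarrow> ('r, 'm) module)
    \<Rightarrow> ('p set \<Rightarrow> 'p set \<Rightarrow> 'm \<Rightarrow> 'm) \<Rightarrow> bool" where
  "scott_sheaf R Fo Fr \<longleftrightarrow>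
     (\<forall>U. scott_open U \<longrightarrow> module R (Fo U)) \<and>
     (\<forall>U V. scott_open U \<and> scott_open V \<and> V \<subseteq> U \<longrightarrow> mod_hom R (Fo U) (Fo V) (Fr U V)) \<and>
     (\<forall>U. scott_open U \<longrightarrow> (\<forall>s\<in>carrier (Fo U). Fr U U s = s)) \<and>
     (\<forall>U V W. scott_open U \<and> scott_open V \<and> scott_open W \<and> W \<subseteq> V \<and> V \<subseteq> U \<longrightarrow>
        (\<forall>s\<in>carrier (Fo U). Fr V W (Fr U V s) = Fr U W s)) \<and>
     \<comment> \<open>locality\<close>
     (\<forall>U \<U>. scott_open U \<and> (\<forall>V\<in>\<U>. scott_open V) \<and> \<Union>\<U> = U \<longrightarrow>
        (\<forall>s\<in>carrier (Fo U). \<forall>t\<in>carrier (Fo U). (\<forall>V\<in>\<U>. Fr U V s = Fr U V t) \<longrightarrow> s = t)) \<and>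
     \<comment> \<open>gluing\<close>
     (\<forall>U \<U> s. scott_open U \<and> (\<forall>V\<in>\<U>. scott_open V) \<and> \<Union>\<U> = U \<and>
        (\<forall>V\<in>\<U>. s V \<in> carrier (Fo V)) \<and>
        (\<forall>V\<in>\<U>. \<forall>W\<in>\<U>. Fr V (V \<inter> W) (s V) = Fr W (V \<inter> W) (s W)) \<longrightarrow>
        (\<exists>t\<in>carrier (Fo U). \<forall>V\<in>\<U>. Fr U V t = s V))"

text \<open>Since every T eps is an order automorphism (TR1), it is a homeomorphism of the
  Scott topology, and the inverse image sheaf is (T^* F)(U) = F(T ` U), with restriction
  maps those of F; the natural morphism F -> T^* F is restriction F(U) -> F(T ` U)
  (note T ` U \<subseteq> U for U an up-set).  A morphism A -> T^* B is thus a family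
  f U : A(U) -> B(T ` U) natural in U.\<close>

definition sh_mor_to_pullback :: "('r, 'x) ring_scheme \<Rightarrow> ('p::order \<Rightarrow> 'p)
    \<Rightarrow> ('p set \<Rightarrow> ('r, 'm) module) \<Rightarrow> ('p set \<Rightarrow> 'p set \<Rightarrow> 'm \<Rightarrow> 'm)
    \<Rightarrow> ('p set \<Rightarrow> ('r, 'n) module) \<Rightarrow> ('p set \<Rightarrow> 'p set \<Rightarrow> 'n \<Rightarrow> 'n)
    \<Rightarrow> ('p set \<Rightarrow> 'm \<Rightarrow> 'n) \<Rightarrow> bool" where
  "sh_mor_to_pullback R T Ao Ar Bo Br f \<longleftrightarrow>
     (\<forall>U. scott_open U \<longrightarrow> mod_hom R (Ao U) (Bo (T ` U)) (f U)) \<and>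
     (\<forall>U V. scott_open U \<and> scott_open V \<and> V \<subseteq> U \<longrightarrow>
        (\<forall>s\<in>carrier (Ao U). f V (Ar U V s) = Br (T ` U) (T ` V) (f U s)))"

definition sh_interleaved :: "('r, 'x) ring_scheme \<Rightarrow> ('p::order \<Rightarrow> 'p)
    \<Rightarrow> ('p set \<Rightarrow> ('r, 'm) module) \<Rightarrow> ('p set \<Rightarrow> 'p set \<Rightarrow> 'm \<Rightarrow> 'm)
    \<Rightarrow> ('p set \<Rightarrow> ('r, 'n) module) \<Rightarrow> ('p set \<Rightarrow> 'p set \<Rightarrow> 'n \<Rightarrow> 'n) \<Rightarrow> bool" where
  "sh_interleaved R T Ao Ar Bo Br \<longleftrightarrow>
     (\<exists>f g. sh_mor_to_pullback R T Ao Ar Bo Br f \<and> sh_mor_to_pullback R T Bo Br Ao Ar g \<and>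
        (\<forall>U. scott_open U \<longrightarrow>
           (\<forall>s\<in>carrier (Ao U). g (T ` U) (f U s) = Ar U (T ` T ` U) s)) \<and>
        (\<forall>U. scott_open U \<longrightarrow>
           (\<forall>s\<in>carrier (Bo U). f (T ` U) (g U s) = Br U (T ` T ` U) s)))"

definition sh_dist :: "('r, 'x) ring_scheme \<Rightarrow> (real \<Rightarrow> 'p::order \<Rightarrow> 'p)
    \<Rightarrow> ('p set \<Rightarrow> ('r, 'm) module) \<Rightarrow> ('p set \<Rightarrow> 'p set \<Rightarrow> 'm \<Rightarrow> 'm)
    \<Rightarrow> ('p set \<Rightarrow> ('r, 'n) module) \<Rightarrow> ('p set \<Rightarrow> 'p set \<Rightarrow> 'n \<Rightarrow> 'n) \<Rightarrow> ereal" where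
  "sh_dist R T Ao Ar Bo Br =
     Inf {ereal e | e. 0 \<le> e \<and> sh_interleaved R (T e) Ao Ar Bo Br}"

text \<open>The zero sheaf is zero_module on every open, with identity restrictions.\<close>

end

theory Submission
  imports Defs
begin

text \<open>An \<open>\<epsilon>\<close>-interleaving with the zero object is the same as the vanishing of the natural
  morphism to \<open>T\<^sub>\<epsilon>\<^sup>*T\<^sub>\<epsilon>\<^sup>*\<close>, so distance 0 means that this morphism vanishes for arbitrarily
  small \<open>\<epsilon>\<close>.  By superlinearity, TR2 and TR3, \<open>p \<lless> q\<close> holds iff \<open>T\<^sub>\<epsilon>(T\<^sub>\<epsilon> p) \<le> q\<close> for all
  small \<open>\<epsilon>\<close>, which turns the condition into ephemerality for persistence modules.  For a Scott
  sheaf, continuity of the poset and TR3 show that the opens \<open>T\<^sub>\<epsilon>(T\<^sub>\<epsilon> U)\<close>, for small \<open>\<epsilon>\<close>,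
  cover \<open>U\<close>; a section all of whose restrictions to them vanish is zero by locality.\<close>

lemma mod_hom_closed: "mod_hom R M N f \<Longrightarrow> x \<in> carrier M \<Longrightarrow> f x \<in> carrier N"
  unfolding mod_hom_def by blast

lemma mod_hom_zero:
  assumes "module R M" "module R N" "mod_hom R M N f"
  shows "f \<zero>\<^bsub>M\<^esub> = \<zero>\<^bsub>N\<^esub>"
proof -
  interpret M: module R M by fact
  interpret N: module R N by fact
  have closed: "f \<zero>\<^bsub>M\<^esub> \<in> carrier N" using mod_hom_closed[OF assms(3)] by simp
  have "f (\<zero>\<^bsub>M\<^esub> \<oplus>\<^bsub>M\<^esub> \<zero>\<^bsub>M\<^esub>) = f \<zero>\<^bsub>M\<^esub> \<oplus>\<^bsub>N\<^esub> f \<zero>\<^bsub>M\<^esub>"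
    using assms(3) unfolding mod_hom_def by blast
  then show ?thesis using closed by simp
qed

lemma mod_hom_from_zero_module:
  assumes "module R N" "mod_hom R zero_module N g"
  shows "g x = \<zero>\<^bsub>N\<^esub>"
proof -
  interpret N: module R N by fact
  have "g x \<in> carrier N" "g x = g x \<oplus>\<^bsub>N\<^esub> g x"
    using assms(2) by (auto simp: mod_hom_def zero_module_def)
  then show ?thesis by simp
qed

lemma mod_hom_to_zero_module: "mod_hom R M zero_module (\<lambda>_. ())"
  unfolding mod_hom_def by (simp add: zero_module_def)

lemma mod_hom_zero_module_zero:
  assumes "module R N"
  shows "mod_hom R zero_module N (\<lambda>_. \<zero>\<^bsub>N\<^esub>)"
proof -
  interpret N: module R N by fact
  show ?thesis unfolding mod_hom_def by (simp add: zero_module_def)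
qed

lemma way_below_le_trans: "x \<lless> y \<Longrightarrow> y \<le> z \<Longrightarrow> x \<lless> z"
  unfolding way_below_def by (meson order_trans)

lemma order_iso_directed_image:
  assumes "order_iso f"
  shows "directed (f ` D) \<longleftrightarrow> directed D"
proof -
  have le: "\<And>x y. x \<le> y \<longleftrightarrow> f x \<le> f y" using assms unfolding order_iso_def by blast
  show ?thesis unfolding directed_def by (auto simp: le[symmetric])
qed

lemma order_iso_is_sup_image:
  assumes "order_iso f"
  shows "is_sup (f ` D) (f s) \<longleftrightarrow> is_sup D s"
proof -
  have le: "\<And>x y. x \<le> y \<longleftrightarrow> f x \<le> f y" and surj: "surj f"
    using assms unfolding order_iso_def by (auto dest: bij_is_surj)
  have "(\<forall>u. (\<forall>d\<in>D. f d \<le> u) \<longrightarrow> f s \<le> u) \<longleftrightarrow> (\<forall>v. (\<forall>d\<in>D. d \<le> v) \<longrightarrow> s \<le> v)"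
    by (metis le surj surjD)
  then show ?thesis unfolding is_sup_def by (simp add: le[symmetric])
qed

lemma order_iso_image_scott_open:
  assumes iso: "order_iso f" and U: "scott_open U"
  shows "scott_open (f ` U)"
proof -
  have le: "\<And>x y. x \<le> y \<longleftrightarrow> f x \<le> f y" and surj: "surj f"
    using iso unfolding order_iso_def by (auto dest: bij_is_surj)
  show ?thesis
    unfolding scott_open_def
  proof (intro conjI allI impI)
    fix x y assume xy: "x \<in> f ` U \<and> x \<le> y"
    then obtain u where "u \<in> U" "x = f u" by blast
    moreover obtain z where "y = f z" using surj by (blast dest: surjD)
    ultimately show "y \<in> f ` U"
      using U xy le unfolding scott_open_def by blast
  next
    fix D s assume D: "directed D \<and> is_sup D s \<and> s \<in> f ` U"
    then obtain u where "u \<in> U" "s = f u" by blast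
    have "f ` (f -` D) = D" using surj by (rule surj_image_vimage_eq)
    then have "directed (f -` D)" "is_sup (f -` D) u"
      using D \<open>s = f u\<close> order_iso_directed_image[OF iso] order_iso_is_sup_image[OF iso] by metis+
    then have "f -` D \<inter> U \<noteq> {}" using U \<open>u \<in> U\<close> unfolding scott_open_def by blast
    then show "D \<inter> f ` U \<noteq> {}" by blast
  qed
qed

lemma TR1_image_scott_open:
  assumes "TR1 T" "0 \<le> e" "scott_open U"
  shows "scott_open (T e ` U)"
  using assms order_iso_image_scott_open unfolding TR1_def by blast

lemma translation_image_subset:
  assumes "translation T" "scott_open U"
  shows "T ` U \<subseteq> U"
  using assms unfolding translation_def scott_open_def by blast

lemma superlinearD: "superlinear T \<Longrightarrow> 0 \<le> e \<Longrightarrow> 0 \<le> d \<Longrightarrow> T e (T d p) \<le> T (e + d) p"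
  unfolding superlinear_def by blast

lemma superlinear_translation_mono:
  assumes tr: "\<forall>e\<ge>0. translation (T e)" and sl: "superlinear T" and "0 \<le> e" "e \<le> e'"
  shows "T e p \<le> T e' p"
proof -
  have "T e p \<le> T (e' - e) (T e p)" using tr assms(4) unfolding translation_def by simp
  also have "\<dots> \<le> T (e' - e + e) p" using superlinearD[OF sl, of "e' - e" e] assms(3,4) by simp
  finally show ?thesis by simp
qed

lemma way_below_double_translate_le:
  assumes tr: "\<forall>e\<ge>0. translation (T e)" and sl: "superlinear T" and "TR3 T" and "p \<lless> q"
  obtains d where "d > 0" "\<And>e. 0 \<le> e \<Longrightarrow> e < d \<Longrightarrow> T e (T e p) \<le> q"
proof -
  obtain \<epsilon> where "\<epsilon> > 0" "T \<epsilon> p \<le> q" using assms(3,4) unfolding TR3_def by blast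
  have "T e (T e p) \<le> q" if "0 \<le> e" "e < \<epsilon> / 2" for e
  proof -
    have "T e (T e p) \<le> T (e + e) p" using superlinearD[OF sl] \<open>0 \<le> e\<close> by blast
    also have "\<dots> \<le> T \<epsilon> p" using superlinear_translation_mono[OF tr sl] that by simp
    finally show ?thesis using \<open>T \<epsilon> p \<le> q\<close> by simp
  qed
  then show thesis using that \<open>\<epsilon> > 0\<close> by (meson half_gt_zero)
qed

lemma Inf_ereal_nonneg_eq_0_iff:
  "Inf {ereal e | e. 0 \<le> e \<and> P e} = 0 \<longleftrightarrow> (\<forall>d>0. \<exists>e. 0 \<le> e \<and> e < d \<and> P e)"
  (is "Inf ?S = 0 \<longleftrightarrow> _")
proof
  assume "Inf ?S = 0"
  show "\<forall>d>0. \<exists>e. 0 \<le> e \<and> e < d \<and> P e"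
  proof (intro allI impI)
    fix d :: real assume "d > 0"
    then have "Inf ?S < ereal d" using \<open>Inf ?S = 0\<close> by simp
    then show "\<exists>e. 0 \<le> e \<and> e < d \<and> P e" by (auto simp: Inf_less_iff)
  qed
next
  assume small: "\<forall>d>0. \<exists>e. 0 \<le> e \<and> e < d \<and> P e"
  have "Inf ?S \<le> 0"
  proof (rule ereal_le_epsilon2)
    fix d :: real assume "0 < d"
    then obtain e where "0 \<le> e" "e < d" "P e" using small by blast
    then have "Inf ?S \<le> ereal e" by (intro Inf_lower) auto
    also have "\<dots> \<le> 0 + ereal d" using \<open>e < d\<close> by simp
    finally show "Inf ?S \<le> 0 + ereal d" .
  qed
  moreover have "0 \<le> Inf ?S" by (rule Inf_greatest) auto
  ultimately show "Inf ?S = 0" by simp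
qed

lemma pers_moduleD:
  assumes "pers_module R Mo Mm"
  shows "module R (Mo p)"
    and "p \<le> q \<Longrightarrow> mod_hom R (Mo p) (Mo q) (Mm p q)"
    and "p \<le> q \<Longrightarrow> q \<le> r \<Longrightarrow> x \<in> carrier (Mo p) \<Longrightarrow> Mm q r (Mm p q x) = Mm p r x"
  using assms unfolding pers_module_def by simp_all

lemma pm_mor_to_pullback_hom:
  "pm_mor_to_pullback R T Ao Am Bo Bm f \<Longrightarrow> mod_hom R (Ao p) (Bo (T p)) (f p)"
  unfolding pm_mor_to_pullback_def by blast

lemma pm_interleaved_zero_iff:
  fixes T :: "'p::order \<Rightarrow> 'p"
  assumes pm: "pers_module R Mo Mm" and "mono T"
  shows "pm_interleaved R T Mo Mm (\<lambda>_. zero_module) (\<lambda>_ _ y. y) \<longleftrightarrow>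
    (\<forall>p. \<forall>x\<in>carrier (Mo p). Mm p (T (T p)) x = \<zero>\<^bsub>Mo (T (T p))\<^esub>)"
proof
  assume "pm_interleaved R T Mo Mm (\<lambda>_. zero_module) (\<lambda>_ _ y. y)"
  then obtain f g where g: "pm_mor_to_pullback R T (\<lambda>_. zero_module) (\<lambda>_ _ y. y) Mo Mm g"
    and gf: "\<forall>p. \<forall>x\<in>carrier (Mo p). g (T p) (f p x) = Mm p (T (T p)) x"
    unfolding pm_interleaved_def by blast
  have "g (T p) y = \<zero>\<^bsub>Mo (T (T p))\<^esub>" for p y
    using pers_moduleD(1)[OF pm] pm_mor_to_pullback_hom[OF g] by (rule mod_hom_from_zero_module)
  then show "\<forall>p. \<forall>x\<in>carrier (Mo p). Mm p (T (T p)) x = \<zero>\<^bsub>Mo (T (T p))\<^esub>"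
    using gf by simp
next
  assume vanish: "\<forall>p. \<forall>x\<in>carrier (Mo p). Mm p (T (T p)) x = \<zero>\<^bsub>Mo (T (T p))\<^esub>"
  define g where "g p y = \<zero>\<^bsub>Mo (T p)\<^esub>" for p and y :: unit
  have "pm_mor_to_pullback R T Mo Mm (\<lambda>_. zero_module) (\<lambda>_ _ y. y) (\<lambda>_ _. ())"
    unfolding pm_mor_to_pullback_def by (simp add: mod_hom_to_zero_module)
  moreover have "pm_mor_to_pullback R T (\<lambda>_. zero_module) (\<lambda>_ _ y. y) Mo Mm g"
    unfolding pm_mor_to_pullback_def
  proof (intro conjI allI impI ballI)
    fix p
    show "mod_hom R zero_module (Mo (T p)) (g p)"
      unfolding g_def by (rule mod_hom_zero_module_zero[OF pers_moduleD(1)[OF pm]])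
  next
    fix p q :: 'p and y assume "p \<le> q"
    then have "T p \<le> T q" using \<open>mono T\<close> by (simp add: monoD)
    then show "g q y = Mm (T p) (T q) (g p y)"
      unfolding g_def using mod_hom_zero pers_moduleD[OF pm] by metis
  qed
  ultimately show "pm_interleaved R T Mo Mm (\<lambda>_. zero_module) (\<lambda>_ _ y. y)"
    unfolding pm_interleaved_def using vanish by (auto simp: g_def)
qed

lemma pm_dist_zero_eq_0_iff:
  assumes "pers_module R Mo Mm" and "\<forall>e\<ge>0. translation (T e)"
  shows "pm_dist R T Mo Mm (\<lambda>_. zero_module) (\<lambda>_ _ y. y) = 0 \<longleftrightarrow>
    (\<forall>d>0. \<exists>e. 0 \<le> e \<and> e < d \<and>
       (\<forall>p. \<forall>x\<in>carrier (Mo p). Mm p (T e (T e p)) x = \<zero>\<^bsub>Mo (T e (T e p))\<^esub>))"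
proof -
  have "pm_interleaved R (T e) Mo Mm (\<lambda>_. zero_module) (\<lambda>_ _ y. y) \<longleftrightarrow>
      (\<forall>p. \<forall>x\<in>carrier (Mo p). Mm p (T e (T e p)) x = \<zero>\<^bsub>Mo (T e (T e p))\<^esub>)" if "0 \<le> e" for e
    using pm_interleaved_zero_iff assms that unfolding translation_def by blast
  then show ?thesis
    unfolding pm_dist_def Inf_ereal_nonneg_eq_0_iff by (metis (no_types, lifting))
qed

lemma ephemeral_iff_double_translate_vanishes:
  assumes pm: "pers_module R Mo Mm" and tr: "\<forall>e\<ge>0. translation (T e)" and sl: "superlinear T"
    and "TR2 T" "TR3 T"
  shows "ephemeral Mo Mm \<longleftrightarrow>
    (\<forall>d>0. \<exists>e. 0 \<le> e \<and> e < d \<and>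
       (\<forall>p. \<forall>x\<in>carrier (Mo p). Mm p (T e (T e p)) x = \<zero>\<^bsub>Mo (T e (T e p))\<^esub>))"
proof
  assume eph: "ephemeral Mo Mm"
  have "\<forall>p. \<forall>x\<in>carrier (Mo p). Mm p (T e (T e p)) x = \<zero>\<^bsub>Mo (T e (T e p))\<^esub>" if "e > 0" for e
  proof -
    have "p \<lless> T e (T e p)" for p
      using \<open>TR2 T\<close> tr that way_below_le_trans unfolding TR2_def translation_def by (meson less_imp_le)
    then show ?thesis using eph unfolding ephemeral_def by blast
  qed
  then show "\<forall>d>0. \<exists>e. 0 \<le> e \<and> e < d \<and>
       (\<forall>p. \<forall>x\<in>carrier (Mo p). Mm p (T e (T e p)) x = \<zero>\<^bsub>Mo (T e (T e p))\<^esub>)"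
    by (meson field_lbound_gt_zero less_imp_le)
next
  assume small: "\<forall>d>0. \<exists>e. 0 \<le> e \<and> e < d \<and>
       (\<forall>p. \<forall>x\<in>carrier (Mo p). Mm p (T e (T e p)) x = \<zero>\<^bsub>Mo (T e (T e p))\<^esub>)"
  show "ephemeral Mo Mm"
    unfolding ephemeral_def
  proof (intro allI impI ballI)
    fix p q x assume "p \<lless> q" and x: "x \<in> carrier (Mo p)"
    then obtain d where "d > 0" and below: "\<And>e. 0 \<le> e \<Longrightarrow> e < d \<Longrightarrow> T e (T e p) \<le> q"
      using way_below_double_translate_le[OF tr sl \<open>TR3 T\<close>] by metis
    then obtain e where e: "0 \<le> e" "e < d"
      and vanish: "\<forall>x\<in>carrier (Mo p). Mm p (T e (T e p)) x = \<zero>\<^bsub>Mo (T e (T e p))\<^esub>"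
      using small by blast
    let ?r = "T e (T e p)"
    have "p \<le> ?r" "?r \<le> q" using tr e below unfolding translation_def by (auto intro: order_trans)
    then have "Mm p q x = Mm ?r q (Mm p ?r x)" using pers_moduleD(3)[OF pm] x by simp
    also have "\<dots> = Mm ?r q \<zero>\<^bsub>Mo ?r\<^esub>" using vanish x by simp
    also have "\<dots> = \<zero>\<^bsub>Mo q\<^esub>" using mod_hom_zero pers_moduleD[OF pm] \<open>?r \<le> q\<close> by metis
    finally show "Mm p q x = \<zero>\<^bsub>Mo q\<^esub>" .
  qed
qed

lemma scott_sheafD:
  assumes "scott_sheaf R Fo Fr"
  shows "scott_open U \<Longrightarrow> module R (Fo U)"
    and "scott_open U \<Longrightarrow> scott_open V \<Longrightarrow> V \<subseteq> U \<Longrightarrow> mod_hom R (Fo U) (Fo V) (Fr U V)"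
  using assms unfolding scott_sheaf_def by simp_all

lemma scott_sheaf_locality:
  assumes "scott_sheaf R Fo Fr" "scott_open U" "\<forall>V\<in>\<U>. scott_open V" "\<Union>\<U> = U"
    and "s \<in> carrier (Fo U)" "t \<in> carrier (Fo U)" "\<forall>V\<in>\<U>. Fr U V s = Fr U V t"
  shows "s = t"
  using assms unfolding scott_sheaf_def by (elim conjE) metis

lemma sh_mor_to_pullback_hom:
  "sh_mor_to_pullback R T Ao Ar Bo Br f \<Longrightarrow> scott_open U \<Longrightarrow> mod_hom R (Ao U) (Bo (T ` U)) (f U)"
  unfolding sh_mor_to_pullback_def by blast

lemma sh_interleaved_zero_iff:
  fixes T :: "'p::order \<Rightarrow> 'p"
  assumes sh: "scott_sheaf R Fo Fr" and opn: "\<And>U. scott_open U \<Longrightarrow> scott_open (T ` U)"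
  shows "sh_interleaved R T Fo Fr (\<lambda>_. zero_module) (\<lambda>_ _ y. y) \<longleftrightarrow>
    (\<forall>U. scott_open U \<longrightarrow> (\<forall>s\<in>carrier (Fo U). Fr U (T ` T ` U) s = \<zero>\<^bsub>Fo (T ` T ` U)\<^esub>))"
proof
  assume "sh_interleaved R T Fo Fr (\<lambda>_. zero_module) (\<lambda>_ _ y. y)"
  then obtain f g where g: "sh_mor_to_pullback R T (\<lambda>_. zero_module) (\<lambda>_ _ y. y) Fo Fr g"
    and gf: "\<forall>U. scott_open U \<longrightarrow> (\<forall>s\<in>carrier (Fo U). g (T ` U) (f U s) = Fr U (T ` T ` U) s)"
    unfolding sh_interleaved_def by blast
  have "g (T ` U) y = \<zero>\<^bsub>Fo (T ` T ` U)\<^esub>" if "scott_open U" for U y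
    using scott_sheafD(1)[OF sh opn[OF opn[OF that]]] sh_mor_to_pullback_hom[OF g opn[OF that]]
    by (rule mod_hom_from_zero_module)
  then show "\<forall>U. scott_open U \<longrightarrow> (\<forall>s\<in>carrier (Fo U). Fr U (T ` T ` U) s = \<zero>\<^bsub>Fo (T ` T ` U)\<^esub>)"
    using gf by simp
next
  assume vanish: "\<forall>U. scott_open U \<longrightarrow>
    (\<forall>s\<in>carrier (Fo U). Fr U (T ` T ` U) s = \<zero>\<^bsub>Fo (T ` T ` U)\<^esub>)"
  define g where "g U y = \<zero>\<^bsub>Fo (T ` U)\<^esub>" for U and y :: unit
  have "sh_mor_to_pullback R T Fo Fr (\<lambda>_. zero_module) (\<lambda>_ _ y. y) (\<lambda>_ _. ())"
    unfolding sh_mor_to_pullback_def by (simp add: mod_hom_to_zero_module)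
  moreover have "sh_mor_to_pullback R T (\<lambda>_. zero_module) (\<lambda>_ _ y. y) Fo Fr g"
    unfolding sh_mor_to_pullback_def
  proof (intro conjI allI impI ballI)
    fix U :: "'p set" assume "scott_open U"
    show "mod_hom R zero_module (Fo (T ` U)) (g U)"
      unfolding g_def by (rule mod_hom_zero_module_zero[OF scott_sheafD(1)[OF sh opn[OF \<open>scott_open U\<close>]]])
  next
    fix U V :: "'p set" and y assume "scott_open U \<and> scott_open V \<and> V \<subseteq> U"
    then have "scott_open (T ` U)" "scott_open (T ` V)" "T ` V \<subseteq> T ` U" using opn by auto
    then show "g V y = Fr (T ` U) (T ` V) (g U y)"
      unfolding g_def using mod_hom_zero[OF scott_sheafD(1,1,2)[OF sh]] by simp
  qed
  ultimately show "sh_interleaved R T Fo Fr (\<lambda>_. zero_module) (\<lambda>_ _ y. y)"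
    unfolding sh_interleaved_def using vanish by (intro exI conjI) (auto simp: g_def)
qed

lemma sh_dist_zero_eq_0_iff:
  assumes "scott_sheaf R Fo Fr" and "TR1 T"
  shows "sh_dist R T Fo Fr (\<lambda>_. zero_module) (\<lambda>_ _ y. y) = 0 \<longleftrightarrow>
    (\<forall>d>0. \<exists>e. 0 \<le> e \<and> e < d \<and> (\<forall>U. scott_open U \<longrightarrow>
       (\<forall>s\<in>carrier (Fo U). Fr U (T e ` T e ` U) s = \<zero>\<^bsub>Fo (T e ` T e ` U)\<^esub>)))"
proof -
  have "sh_interleaved R (T e) Fo Fr (\<lambda>_. zero_module) (\<lambda>_ _ y. y) \<longleftrightarrow>
      (\<forall>U. scott_open U \<longrightarrow> (\<forall>s\<in>carrier (Fo U). Fr U (T e ` T e ` U) s = \<zero>\<^bsub>Fo (T e ` T e ` U)\<^esub>))"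
    if "0 \<le> e" for e
    using sh_interleaved_zero_iff[OF assms(1)] TR1_image_scott_open[OF assms(2) that] by blast
  then show ?thesis
    unfolding sh_dist_def Inf_ereal_nonneg_eq_0_iff by (metis (no_types, lifting))
qed

lemma scott_open_double_translate:
  assumes "\<forall>e\<ge>0. translation (T e)" "TR1 T" "0 \<le> e" "scott_open U"
  shows "scott_open (T e ` T e ` U)" and "T e ` T e ` U \<subseteq> U"
proof -
  have "scott_open (T e ` U)" using TR1_image_scott_open assms(2-4) by blast
  then show "scott_open (T e ` T e ` U)" using TR1_image_scott_open assms(2,3) by blast
  have "translation (T e)" using assms(1,3) by simp
  then have "T e ` T e ` U \<subseteq> T e ` U" "T e ` U \<subseteq> U"
    using translation_image_subset \<open>scott_open (T e ` U)\<close> assms(4) by simp_all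
  then show "T e ` T e ` U \<subseteq> U" by blast
qed

lemma scott_open_double_translate_mem:
  fixes T :: "real \<Rightarrow> 'p::order \<Rightarrow> 'p"
  assumes "continuous_poset TYPE('p)" and tr: "\<forall>e\<ge>0. translation (T e)" and sl: "superlinear T"
    and "TR1 T" "TR3 T" and U: "scott_open U" "x \<in> U"
  obtains d where "d > 0" "\<And>e. 0 \<le> e \<Longrightarrow> e < d \<Longrightarrow> x \<in> T e ` T e ` U"
proof -
  have "directed {y. y \<lless> x}" "is_sup {y. y \<lless> x} x"
    using assms(1) unfolding continuous_poset_def by auto
  then obtain y where "y \<lless> x" "y \<in> U" using U unfolding scott_open_def by blast
  then obtain d where "d > 0" and below: "\<And>e. 0 \<le> e \<Longrightarrow> e < d \<Longrightarrow> T e (T e y) \<le> x"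
    using way_below_double_translate_le[OF tr sl \<open>TR3 T\<close>] by metis
  have "x \<in> T e ` T e ` U" if "0 \<le> e" "e < d" for e
  proof -
    have "scott_open (T e ` T e ` U)" using scott_open_double_translate(1) tr \<open>TR1 T\<close> that U by blast
    moreover have "T e (T e y) \<in> T e ` T e ` U" using \<open>y \<in> U\<close> by blast
    ultimately show ?thesis using below[OF that] unfolding scott_open_def by blast
  qed
  then show thesis using that \<open>d > 0\<close> by blast
qed

lemma scott_sheaf_section_eq_zero:
  fixes T :: "real \<Rightarrow> 'p::order \<Rightarrow> 'p"
  assumes sh: "scott_sheaf R Fo Fr" and "continuous_poset TYPE('p)"
    and tr: "\<forall>e\<ge>0. translation (T e)" and sl: "superlinear T" and "TR1 T" "TR3 T"
    and U: "scott_open U" and s: "s \<in> carrier (Fo U)"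
    and small: "\<forall>d>0. \<exists>e. 0 \<le> e \<and> e < d \<and> Fr U (T e ` T e ` U) s = \<zero>\<^bsub>Fo (T e ` T e ` U)\<^esub>"
  shows "s = \<zero>\<^bsub>Fo U\<^esub>"
proof -
  interpret M: module R "Fo U" using scott_sheafD(1)[OF sh U] .
  note opn = scott_open_double_translate(1)[OF tr \<open>TR1 T\<close> _ U]
    and sub = scott_open_double_translate(2)[OF tr \<open>TR1 T\<close> _ U]
  define \<U> where "\<U> = (\<lambda>e. T e ` T e ` U) ` {e. 0 \<le> e \<and> Fr U (T e ` T e ` U) s = \<zero>\<^bsub>Fo (T e ` T e ` U)\<^esub>}"
  have "\<forall>V\<in>\<U>. scott_open V" unfolding \<U>_def using opn by blast
  moreover have "\<Union>\<U> = U"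
  proof
    show "\<Union>\<U> \<subseteq> U" unfolding \<U>_def using sub by blast
    show "U \<subseteq> \<Union>\<U>"
    proof
      fix x assume "x \<in> U"
      then obtain d where "d > 0" and mem: "\<And>e. 0 \<le> e \<Longrightarrow> e < d \<Longrightarrow> x \<in> T e ` T e ` U"
        using scott_open_double_translate_mem[OF assms(2) tr sl \<open>TR1 T\<close> \<open>TR3 T\<close> U] by metis
      then obtain e where "0 \<le> e" "e < d" "Fr U (T e ` T e ` U) s = \<zero>\<^bsub>Fo (T e ` T e ` U)\<^esub>"
        using small by blast
      then show "x \<in> \<Union>\<U>" unfolding \<U>_def using mem by blast
    qed
  qed
  moreover have "\<forall>V\<in>\<U>. Fr U V s = Fr U V \<zero>\<^bsub>Fo U\<^esub>"
  proof
    fix V assume "V \<in> \<U>"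
    then obtain e where "0 \<le> e" and V: "V = T e ` T e ` U" and vanish: "Fr U V s = \<zero>\<^bsub>Fo V\<^esub>"
      unfolding \<U>_def by blast
    have "Fr U V \<zero>\<^bsub>Fo U\<^esub> = \<zero>\<^bsub>Fo V\<^esub>"
      using mod_hom_zero scott_sheafD[OF sh] U opn[OF \<open>0 \<le> e\<close>] sub[OF \<open>0 \<le> e\<close>] unfolding V by blast
    then show "Fr U V s = Fr U V \<zero>\<^bsub>Fo U\<^esub>" using vanish by simp
  qed
  ultimately show ?thesis
    using scott_sheaf_locality[OF sh U _ _ s M.zero_closed] by blast
qed

lemma scott_sheaf_zero_iff_double_translate_vanishes:
  fixes T :: "real \<Rightarrow> 'p::order \<Rightarrow> 'p"
  assumes sh: "scott_sheaf R Fo Fr" and "continuous_poset TYPE('p)"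
    and tr: "\<forall>e\<ge>0. translation (T e)" and sl: "superlinear T" and "TR1 T" "TR3 T"
  shows "(\<forall>U. scott_open U \<longrightarrow> carrier (Fo U) = {\<zero>\<^bsub>Fo U\<^esub>}) \<longleftrightarrow>
    (\<forall>d>0. \<exists>e. 0 \<le> e \<and> e < d \<and> (\<forall>U. scott_open U \<longrightarrow>
       (\<forall>s\<in>carrier (Fo U). Fr U (T e ` T e ` U) s = \<zero>\<^bsub>Fo (T e ` T e ` U)\<^esub>)))"
    (is "?zero \<longleftrightarrow> (\<forall>d>0. \<exists>e. 0 \<le> e \<and> e < d \<and> ?vanish e)")
proof
  assume ?zero
  have "?vanish e" if "0 \<le> e" for e
  proof (intro allI impI ballI)
    fix U s assume U: "scott_open U" and s: "s \<in> carrier (Fo U)"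
    note opn = scott_open_double_translate(1)[OF tr \<open>TR1 T\<close> that U]
      and sub = scott_open_double_translate(2)[OF tr \<open>TR1 T\<close> that U]
    have "Fr U (T e ` T e ` U) s \<in> carrier (Fo (T e ` T e ` U))"
      using mod_hom_closed[OF scott_sheafD(2)[OF sh U opn sub] s] .
    then show "Fr U (T e ` T e ` U) s = \<zero>\<^bsub>Fo (T e ` T e ` U)\<^esub>" using \<open>?zero\<close> opn by simp
  qed
  then show "\<forall>d>0. \<exists>e. 0 \<le> e \<and> e < d \<and> ?vanish e"
    by (meson field_lbound_gt_zero less_imp_le)
next
  assume small: "\<forall>d>0. \<exists>e. 0 \<le> e \<and> e < d \<and> ?vanish e"
  show ?zero
  proof (intro allI impI)
    fix U :: "'p set" assume U: "scott_open U"
    interpret M: module R "Fo U" using scott_sheafD(1)[OF sh U] .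
    have "s = \<zero>\<^bsub>Fo U\<^esub>" if "s \<in> carrier (Fo U)" for s
      using scott_sheaf_section_eq_zero[OF assms U that] small U that by meson
    then show "carrier (Fo U) = {\<zero>\<^bsub>Fo U\<^esub>}"
      using M.zero_closed by blast
  qed
qed

theorem mainTheorem20:
  fixes R :: "('r, 'x) ring_scheme"
    and T :: "real \<Rightarrow> 'p::order \<Rightarrow> 'p"
  assumes "cring R"
    and "continuous_poset TYPE('p)"
    and "\<forall>e\<ge>0. translation (T e) \<and> scott_continuous (T e)"
    and "superlinear T" and "TR1 T" and "TR2 T" and "TR3 T"
  shows
    "(\<forall>(Mo :: 'p \<Rightarrow> ('r, 'm) module) Mm. pers_module R Mo Mm \<longrightarrow>
        (pm_dist R T Mo Mm (\<lambda>_. zero_module) (\<lambda>_ _ y. y) = 0 \<longleftrightarrow> ephemeral Mo Mm)) \<and>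
     (\<forall>(Fo :: 'p set \<Rightarrow> ('r, 'n) module) Fr. scott_sheaf R Fo Fr \<longrightarrow>
        (sh_dist R T Fo Fr (\<lambda>_. zero_module) (\<lambda>_ _ y. y) = 0 \<longleftrightarrow>
         (\<forall>U. scott_open U \<longrightarrow> carrier (Fo U) = {\<zero>\<^bsub>Fo U\<^esub>})))"
proof -
  have tr: "\<forall>e\<ge>0. translation (T e)" using assms(3) by simp
  show ?thesis
  proof (intro conjI allI impI)
    fix Mo :: "'p \<Rightarrow> ('r, 'm) module" and Mm assume pm: "pers_module R Mo Mm"
    show "pm_dist R T Mo Mm (\<lambda>_. zero_module) (\<lambda>_ _ y. y) = 0 \<longleftrightarrow> ephemeral Mo Mm"
      by (simp only: pm_dist_zero_eq_0_iff[OF pm tr]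
          ephemeral_iff_double_translate_vanishes[OF pm tr assms(4,6,7)])
  next
    fix Fo :: "'p set \<Rightarrow> ('r, 'n) module" and Fr assume sh: "scott_sheaf R Fo Fr"
    show "sh_dist R T Fo Fr (\<lambda>_. zero_module) (\<lambda>_ _ y. y) = 0 \<longleftrightarrow>
        (\<forall>U. scott_open U \<longrightarrow> carrier (Fo U) = {\<zero>\<^bsub>Fo U\<^esub>})"
      by (simp only: sh_dist_zero_eq_0_iff[OF sh assms(5)]
          scott_sheaf_zero_iff_double_translate_vanishes[OF sh assms(2) tr assms(4,5,7)])
  qed
qed

end
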